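(* Let $X,Y\in\mathbb{S}^2_{++}$. Then $X\#_tY=X*_tY$ for all $t\in[0,1]$, where $X\#_tY=X^{1/2}(X^{-1/2}YX^{-1/2})^tX^{1/2}$ (all powers being the principal powers of symmetric positive definite matrices).
   Context: $\mathbb{S}^n_{++}$ denotes the set of real symmetric positive definite $n\times n$ matrices. For $X,Y\in\mathbb{S}^n_{++}$ the matrix $YX^{-1}$ has real positive eigenvalues; let $\alpha=\lambda_{\min}(YX^{-1})$ and $\beta=\lambda_{\max}(YX^{-1})$. For $0<\alpha\le\beta$ and $t\in\mathbb{R}$ set $\varphi_{\alpha\beta}(t)=\frac{\beta^t-\alpha^t}{\beta-\alpha}$ and $\psi_{\alpha\beta}(t)=\frac{\beta\alpha^t-\alpha\beta^t}{\beta-\alpha}$ if $\beta>\alpha$, and $\varphi_{\alpha\beta}(t)=t\alpha^{t-1}$, $\psi_{\alpha\beta}(t)=(1-t)\alpha^t$ if $\beta=\alpha$. The Thompson geodesic from $X$ to $Y$ is $X*_tY=\varphi_{\alpha\beta}(t)\,Y+\psi_{\alpha\beta}(t)\,X$. *)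

theory Defs
  imports "HOL-Analysis.Analysis"
begin

definition spd :: "real^'n^'n \<Rightarrow> bool" where
  "spd A \<longleftrightarrow> transpose A = A \<and> (\<forall>x. x \<noteq> 0 \<longrightarrow> x \<bullet> (A *v x) > 0)"

definition diagm :: "('n \<Rightarrow> real) \<Rightarrow> real^'n^'n" where
  "diagm d = (\<chi> i j. if i = j then d i else 0)"

definition spd_pow :: "real^'n^'n \<Rightarrow> real \<Rightarrow> real^'n^'n" where
  "spd_pow A t = (SOME B. \<exists>Q d. orthogonal_matrix Q \<and> (\<forall>i. d i > 0) \<and>
      A = Q ** diagm d ** transpose Q \<and> B = Q ** diagm (\<lambda>i. d i powr t) ** transpose Q)"

definition geo_mean :: "real^'n^'n \<Rightarrow> real \<Rightarrow> real^'n^'n \<Rightarrow> real^'n^'n" where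
  "geo_mean X t Y = spd_pow X (1/2) **
     spd_pow (spd_pow X (-1/2) ** Y ** spd_pow X (-1/2)) t ** spd_pow X (1/2)"

definition real_eigenvalues :: "real^'n^'n \<Rightarrow> real set" where
  "real_eigenvalues M = {c. \<exists>v. v \<noteq> 0 \<and> M *v v = c *\<^sub>R v}"

definition lambda_min :: "real^'n^'n \<Rightarrow> real" where
  "lambda_min M = Min (real_eigenvalues M)"

definition lambda_max :: "real^'n^'n \<Rightarrow> real" where
  "lambda_max M = Max (real_eigenvalues M)"

definition phi_ab :: "real \<Rightarrow> real \<Rightarrow> real \<Rightarrow> real" where
  "phi_ab \<alpha> \<beta> t = (if \<beta> > \<alpha> then (\<beta> powr t - \<alpha> powr t) / (\<beta> - \<alpha>)
                      else t * \<alpha> powr (t - 1))"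

definition psi_ab :: "real \<Rightarrow> real \<Rightarrow> real \<Rightarrow> real" where
  "psi_ab \<alpha> \<beta> t = (if \<beta> > \<alpha> then (\<beta> * \<alpha> powr t - \<alpha> * \<beta> powr t) / (\<beta> - \<alpha>)
                      else (1 - t) * \<alpha> powr t)"

definition thompson_geo :: "real^'n^'n \<Rightarrow> real \<Rightarrow> real^'n^'n \<Rightarrow> real^'n^'n" where
  "thompson_geo X t Y =
     (let M = Y ** matrix_inv X; \<alpha> = lambda_min M; \<beta> = lambda_max M
      in phi_ab \<alpha> \<beta> t *\<^sub>R Y + psi_ab \<alpha> \<beta> t *\<^sub>R X)"

end

theory Submission
  imports Defs
begin

text \<open>
  If a symmetric 2x2 matrix M has eigenvalues \<alpha> \<le> \<beta>, then f(M) = a M + b I for any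
  function f, where a x + b is the affine function interpolating f at \<alpha> and \<beta>: in an
  orthonormal eigenbasis both sides are diagonal with the same entries. Take
  M = X^(-1/2) Y X^(-1/2) and f(x) = x^t; conjugating M^t = a M + b I by X^(1/2) gives
  X #_t Y = a Y + b X. Since M is similar to Y X^(-1), its extreme eigenvalues are the \<alpha>, \<beta>
  of the Thompson geodesic, and for \<alpha> < \<beta> the interpolation coefficients are exactly
  \<phi>_\<alpha>\<beta>(t) and \<psi>_\<alpha>\<beta>(t). If \<alpha> = \<beta> then M = \<alpha> I, so Y = \<alpha> X and both sides equal \<alpha>^t X.
\<close>

lemma matrix_add_rdistrib: "((A::'a::semiring_1^'n^'m) + B) ** C = A ** C + B ** C"
  by (simp add: vec_eq_iff matrix_matrix_mult_def sum.distrib distrib_right)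

lemma diagm_mult_vector_nth: "(diagm d *v v) $ i = d i * v $ i"
proof -
  have "(\<Sum>k\<in>UNIV. (if i = k then d i else 0) * v $ k)
      = (\<Sum>k\<in>UNIV. if k = i then d i * v $ i else 0)"
    by (rule sum.cong) auto
  then show ?thesis
    by (simp add: diagm_def matrix_vector_mult_def)
qed

lemma diagm_mult: "diagm d ** diagm e = diagm (\<lambda>i. d i * e i)"
proof -
  have "(\<Sum>k\<in>UNIV. (if i = k then d i else 0) * (if k = j then e k else 0))
      = (\<Sum>k\<in>UNIV. if k = i then (if i = j then d i * e i else 0) else 0)" for i j
    by (rule sum.cong) auto
  then show ?thesis
    by (simp add: vec_eq_iff matrix_matrix_mult_def diagm_def)
qed

lemma transpose_diagm [simp]: "transpose (diagm d) = diagm d"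
  by (simp add: vec_eq_iff transpose_def diagm_def)

lemma diagm_const: "diagm (\<lambda>i. c) = c *\<^sub>R mat 1"
  by (simp add: vec_eq_iff diagm_def mat_def)

definition spectral_matrix :: "real^'n^'n \<Rightarrow> ('n \<Rightarrow> real) \<Rightarrow> real^'n^'n" where
  "spectral_matrix Q d = Q ** diagm d ** transpose Q"

lemma transpose_spectral_matrix: "transpose (spectral_matrix Q d) = spectral_matrix Q d"
  by (simp add: spectral_matrix_def matrix_transpose_mul matrix_mul_assoc)

lemma spectral_matrix_mult:
  assumes "orthogonal_matrix Q"
  shows "spectral_matrix Q d ** spectral_matrix Q e = spectral_matrix Q (\<lambda>i. d i * e i)"
proof -
  have "spectral_matrix Q d ** spectral_matrix Q e
      = Q ** (diagm d ** ((transpose Q ** Q) ** (diagm e ** transpose Q)))"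
    by (simp add: spectral_matrix_def matrix_mul_assoc)
  with assms show ?thesis
    by (simp add: spectral_matrix_def orthogonal_matrix_def diagm_mult matrix_mul_assoc)
qed

lemma spectral_matrix_const:
  "orthogonal_matrix Q \<Longrightarrow> spectral_matrix Q (\<lambda>i. c) = c *\<^sub>R mat 1"
  by (simp add: spectral_matrix_def diagm_const matrix_scalar_ac scalar_matrix_assoc[symmetric]
      orthogonal_matrix_def)

lemma matrix_vector_mult_neq_0:
  assumes "B ** A = mat 1" and "v \<noteq> 0"
  shows "A *v v \<noteq> 0"
proof
  assume "A *v v = 0"
  then have "(B ** A) *v v = 0"
    by (simp add: matrix_vector_mul_assoc[symmetric])
  with assms show False by simp
qed

lemma real_eigenvaluesI: "v \<noteq> 0 \<Longrightarrow> M *v v = c *\<^sub>R v \<Longrightarrow> c \<in> real_eigenvalues M"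
  unfolding real_eigenvalues_def by auto

lemma real_eigenvaluesE:
  assumes "c \<in> real_eigenvalues M"
  obtains v where "v \<noteq> 0" "M *v v = c *\<^sub>R v"
  using assms unfolding real_eigenvalues_def by auto

lemma real_eigenvalues_spectral_matrix:
  assumes Q: "orthogonal_matrix Q"
  shows "real_eigenvalues (spectral_matrix Q d) = range d"
proof -
  have QQ: "transpose Q ** Q = mat 1" "Q ** transpose Q = mat 1"
    using Q by (auto simp: orthogonal_matrix_def)
  have "d i \<in> real_eigenvalues (spectral_matrix Q d)" for i
  proof -
    have "diagm d *v axis i 1 = d i *\<^sub>R axis i 1"
      by (simp add: vec_eq_iff diagm_mult_vector_nth axis_def)
    moreover have "spectral_matrix Q d *v (Q *v axis i 1)
        = Q *v (diagm d *v ((transpose Q ** Q) *v axis i 1))"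
      by (simp add: spectral_matrix_def matrix_vector_mul_assoc matrix_mul_assoc
          del: transpose_matrix_vector)
    ultimately have "spectral_matrix Q d *v (Q *v axis i 1) = d i *\<^sub>R (Q *v axis i 1)"
      using QQ by (simp add: matrix_vector_mult_scaleR)
    moreover have "Q *v axis i 1 \<noteq> 0"
      using QQ(1) by (rule matrix_vector_mult_neq_0) simp
    ultimately show ?thesis
      by (intro real_eigenvaluesI)
  qed
  moreover have "c \<in> range d" if c: "c \<in> real_eigenvalues (spectral_matrix Q d)" for c
  proof -
    obtain v where v: "v \<noteq> 0" "spectral_matrix Q d *v v = c *\<^sub>R v"
      by (rule real_eigenvaluesE[OF c])
    define w where "w = transpose Q *v v"
    have "w \<noteq> 0"
      unfolding w_def using QQ(2) v(1) by (rule matrix_vector_mult_neq_0)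
    then obtain i where i: "w $ i \<noteq> 0"
      by (auto simp: vec_eq_iff)
    have "diagm d *v w = transpose Q *v (spectral_matrix Q d *v v)"
      using QQ by (simp add: w_def spectral_matrix_def matrix_vector_mul_assoc matrix_mul_assoc
          del: transpose_matrix_vector)
    then have "diagm d *v w = c *\<^sub>R w"
      by (simp add: v(2) w_def matrix_vector_mult_scaleR del: transpose_matrix_vector)
    then have "(diagm d *v w) $ i = (c *\<^sub>R w) $ i"
      by simp
    then have "d i = c"
      using i by (simp add: diagm_mult_vector_nth)
    then show ?thesis
      using rangeI[of d i] by simp
  qed
  ultimately show ?thesis by blast
qed

lemma spd_eigenvalue_pos:
  assumes "spd A" and "c \<in> real_eigenvalues A"
  shows "c > 0"
proof -
  obtain v where v: "v \<noteq> 0" "A *v v = c *\<^sub>R v"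
    by (rule real_eigenvaluesE[OF assms(2)])
  have "v \<bullet> (A *v v) > 0"
    using assms(1) v(1) unfolding spd_def by blast
  then have "c * (v \<bullet> v) > 0"
    by (simp add: v(2))
  moreover have "v \<bullet> v > 0"
    using v(1) by simp
  ultimately show ?thesis
    by (simp add: zero_less_mult_iff)
qed

lemma spd_congruence:
  fixes Y R :: "real^'n^'n"
  assumes "spd Y" and "invertible R"
  shows "spd (transpose R ** Y ** R)"
  unfolding spd_def
proof (intro conjI allI impI)
  show "transpose (transpose R ** Y ** R) = transpose R ** Y ** R"
    using assms(1) by (simp add: spd_def matrix_transpose_mul matrix_mul_assoc)
next
  fix x :: "real^'n" assume "x \<noteq> 0"
  moreover obtain R' where "R' ** R = mat 1"
    using assms(2) unfolding invertible_def by blast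
  ultimately have "R *v x \<noteq> 0"
    by (intro matrix_vector_mult_neq_0)
  then have "(R *v x) \<bullet> (Y *v (R *v x)) > 0"
    using assms(1) unfolding spd_def by blast
  then show "x \<bullet> ((transpose R ** Y ** R) *v x) > 0"
    by (simp add: matrix_vector_mul_assoc[symmetric] dot_lmul_matrix[symmetric]
        del: transpose_matrix_vector)
qed

lemma real_eigenvalues_similar_subset:
  assumes "S ** R = mat 1" and "R ** S = mat 1"
  shows "real_eigenvalues (S ** M ** R) \<subseteq> real_eigenvalues M"
proof
  fix c assume "c \<in> real_eigenvalues (S ** M ** R)"
  then obtain v where v: "v \<noteq> 0" "(S ** M ** R) *v v = c *\<^sub>R v"
    by (rule real_eigenvaluesE)
  have "R *v v \<noteq> 0"
    using assms(1) v(1) by (rule matrix_vector_mult_neq_0)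
  moreover have "M *v (R *v v) = c *\<^sub>R (R *v v)"
  proof -
    have "M *v (R *v v) = R *v ((S ** M ** R) *v v)"
      using assms(2) by (simp add: matrix_vector_mul_assoc matrix_mul_assoc)
    then show ?thesis
      using v(2) by (simp add: matrix_vector_mult_scaleR)
  qed
  ultimately show "c \<in> real_eigenvalues M"
    by (intro real_eigenvaluesI)
qed

lemma real_eigenvalues_similar:
  assumes "S ** R = mat 1" and "R ** S = mat 1"
  shows "real_eigenvalues (S ** M ** R) = real_eigenvalues M"
proof
  have "R ** (S ** M ** R) ** S = (R ** S) ** M ** (R ** S)"
    by (simp add: matrix_mul_assoc)
  then have "M = R ** (S ** M ** R) ** S"
    using assms(2) by simp
  then show "real_eigenvalues M \<subseteq> real_eigenvalues (S ** M ** R)"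
    using real_eigenvalues_similar_subset[OF assms(2,1), of "S ** M ** R"] by simp
qed (rule real_eigenvalues_similar_subset[OF assms])

lemma matrix_inv_eqI:
  assumes "A ** B = mat 1" and "B ** A = mat 1"
  shows "matrix_inv A = (B :: 'a::semiring_1^'n^'n)"
proof -
  have "A ** matrix_inv A = mat 1 \<and> matrix_inv A ** A = mat 1"
    unfolding matrix_inv_def using assms by (rule someI[of _ B, OF conjI])
  then have "matrix_inv A = matrix_inv A ** (A ** B)"
    using assms by simp
  also have "\<dots> = B"
    using \<open>A ** matrix_inv A = mat 1 \<and> matrix_inv A ** A = mat 1\<close>
    by (simp add: matrix_mul_assoc)
  finally show ?thesis .
qed

lemma symmetric_2x2_unit_eigenvector:
  fixes a b c :: real
  obtains p q l where "p\<^sup>2 + q\<^sup>2 = 1" "a * p + b * q = l * p" "b * p + c * q = l * q"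
proof (cases "b = 0")
  case True
  then show ?thesis using that[of 1 0 a] by simp
next
  case False
  define r where "r = sqrt ((a - c)\<^sup>2 + 4 * b\<^sup>2)"
  define l where "l = (a + c + r) / 2"
  have "r\<^sup>2 = (a - c)\<^sup>2 + 4 * b\<^sup>2"
    unfolding r_def by simp
  then have char: "b * b + c * (l - a) = l * (l - a)"
    unfolding l_def by (simp add: power2_eq_square field_simps)
  define n where "n = sqrt (b\<^sup>2 + (l - a)\<^sup>2)"
  have "n\<^sup>2 = b\<^sup>2 + (l - a)\<^sup>2" and "n > 0"
    using False by (simp_all add: n_def add_pos_nonneg)
  show ?thesis
  proof (rule that[of "b / n" "(l - a) / n" l])
    show "(b / n)\<^sup>2 + ((l - a) / n)\<^sup>2 = 1"
      using \<open>n\<^sup>2 = _\<close> \<open>n > 0\<close> False by (simp add: power_divide add_divide_distrib[symmetric])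
    show "a * (b / n) + b * ((l - a) / n) = l * (b / n)"
      using \<open>n > 0\<close> by (simp add: field_simps)
    show "b * (b / n) + c * ((l - a) / n) = l * ((l - a) / n)"
      using \<open>n > 0\<close> char by (simp add: field_simps)
  qed
qed

lemma symmetric_2x2_spectral:
  fixes A :: "real^2^2"
  assumes "transpose A = A"
  obtains Q d where "orthogonal_matrix Q" "A = spectral_matrix Q d"
proof -
  have sym: "A$2$1 = A$1$2"
    using arg_cong[OF assms, of "\<lambda>M. M $ 1 $ 2"] by (simp add: transpose_def)
  obtain p q l where pq: "p\<^sup>2 + q\<^sup>2 = 1"
    and e1: "A$1$1 * p + A$1$2 * q = l * p" and e2: "A$1$2 * p + A$2$2 * q = l * q"
    by (rule symmetric_2x2_unit_eigenvector)
  \<comment> \<open>the rotation whose first column is the unit eigenvector \<open>(p, q)\<close>\<close>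
  define Q :: "real^2^2"
    where "Q = (\<chi> i j. if i = 1 then (if j = 1 then p else -q) else (if j = 1 then q else p))"
  define d :: "2 \<Rightarrow> real" where "d i = (if i = 1 then l else A$1$1 + A$2$2 - l)" for i
  show ?thesis
  proof
    show "orthogonal_matrix Q"
      unfolding Q_def orthogonal_matrix_def
      apply (simp add: vec_eq_iff matrix_matrix_mult_def transpose_def mat_def forall_2 sum_2)
      using pq by (simp add: power2_eq_square algebra_simps)
    have "a = p * l * p + q * (a + c - l) * q" "b = p * l * q - q * (a + c - l) * p"
      "b = q * l * p - p * (a + c - l) * q" "c = q * l * q + p * (a + c - l) * p"
      if "a * p + b * q = l * p" "b * p + c * q = l * q" for a b c :: real
      using pq that by algebra+
    note entries = this[OF e1 e2]
    show "A = spectral_matrix Q d"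
      unfolding Q_def d_def spectral_matrix_def
      by (simp add: vec_eq_iff matrix_matrix_mult_def transpose_def diagm_def forall_2 sum_2 sym)
        (intro conjI entries)
  qed
qed

lemma spd_2x2_spectral:
  fixes A :: "real^2^2"
  assumes "spd A"
  obtains Q d where "orthogonal_matrix Q" "\<forall>i. d i > 0" "A = spectral_matrix Q d"
proof -
  obtain Q d where Q: "orthogonal_matrix Q" and A: "A = spectral_matrix Q d"
    using assms symmetric_2x2_spectral unfolding spd_def by metis
  have "d i > 0" for i
    using spd_eigenvalue_pos[OF assms] real_eigenvalues_spectral_matrix[OF Q] A by blast
  with Q A show ?thesis using that by blast
qed

lemma range_2: "range (d :: 2 \<Rightarrow> 'a) = {d 1, d 2}"
  by auto (metis exhaust_2)

lemma lambda_min_spectral_matrix_2x2: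
  "orthogonal_matrix (Q::real^2^2) \<Longrightarrow> lambda_min (spectral_matrix Q d) = min (d 1) (d 2)"
  by (simp add: lambda_min_def real_eigenvalues_spectral_matrix range_2)

lemma lambda_max_spectral_matrix_2x2:
  "orthogonal_matrix (Q::real^2^2) \<Longrightarrow> lambda_max (spectral_matrix Q d) = max (d 1) (d 2)"
  by (simp add: lambda_max_def real_eigenvalues_spectral_matrix range_2)

definition interp_slope :: "(real \<Rightarrow> real) \<Rightarrow> real \<Rightarrow> real \<Rightarrow> real" where
  "interp_slope f a b = (if a < b then (f b - f a) / (b - a) else 0)"

definition interp_const :: "(real \<Rightarrow> real) \<Rightarrow> real \<Rightarrow> real \<Rightarrow> real" where
  "interp_const f a b = (if a < b then (b * f a - a * f b) / (b - a) else f a)"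

lemma interp_slope_const_eq:
  assumes "a \<le> b" and "x = a \<or> x = b"
  shows "interp_slope f a b * x + interp_const f a b = f x"
proof (cases "a < b")
  case True
  then have "interp_slope f a b * x + interp_const f a b
      = ((f b - f a) * x + (b * f a - a * f b)) / (b - a)"
    by (simp add: interp_slope_def interp_const_def add_divide_distrib)
  also have "\<dots> = f x"
    using True assms(2) by (auto simp: divide_simps algebra_simps)
  finally show ?thesis .
qed (use assms in \<open>auto simp: interp_slope_def interp_const_def\<close>)

lemma spectral_matrix_2x2_fun_interp:
  fixes Q :: "real^2^2" and d :: "2 \<Rightarrow> real" and f :: "real \<Rightarrow> real"
  assumes Q: "orthogonal_matrix Q"
  defines "a \<equiv> lambda_min (spectral_matrix Q d)" and "b \<equiv> lambda_max (spectral_matrix Q d)"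
  shows "spectral_matrix Q (\<lambda>i. f (d i))
    = interp_slope f a b *\<^sub>R spectral_matrix Q d + interp_const f a b *\<^sub>R mat 1"
proof -
  have ab: "a = min (d 1) (d 2)" "b = max (d 1) (d 2)"
    unfolding a_def b_def
    by (simp_all add: lambda_min_spectral_matrix_2x2[OF Q] lambda_max_spectral_matrix_2x2[OF Q])
  have "d i = a \<or> d i = b" for i
    using exhaust_2[of i] by (auto simp: ab min_def max_def)
  then have "f (d i) = interp_slope f a b * d i + interp_const f a b" for i
    using interp_slope_const_eq[of a b "d i" f] by (simp add: ab)
  then have "diagm (\<lambda>i. f (d i)) = interp_slope f a b *\<^sub>R diagm d + interp_const f a b *\<^sub>R mat 1"
    by (simp add: vec_eq_iff diagm_def mat_def)
  then show ?thesis
    using Q by (simp add: spectral_matrix_def matrix_add_ldistrib matrix_add_rdistrib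
        matrix_scalar_ac scalar_matrix_assoc[symmetric] orthogonal_matrix_def)
qed

lemma spd_pow_spectral_matrix:
  fixes Q :: "real^2^2"
  assumes "orthogonal_matrix Q" and "\<forall>i. d i > 0"
  shows "spd_pow (spectral_matrix Q d) t = spectral_matrix Q (\<lambda>i. d i powr t)"
proof -
  \<comment> \<open>\<open>spd_pow\<close> may choose another decomposition \<open>Q' d'\<close>, but both are given by the same
    interpolation formula; this is where the restriction to dimension 2 enters.\<close>
  let ?A = "spectral_matrix Q d"
  have "\<exists>Q' d'. orthogonal_matrix Q' \<and> (\<forall>i. d' i > 0) \<and> ?A = spectral_matrix Q' d'
      \<and> spd_pow ?A t = spectral_matrix Q' (\<lambda>i. d' i powr t)"
    unfolding spd_pow_def spectral_matrix_def
    by (rule someI_ex) (use assms in \<open>auto simp: spectral_matrix_def\<close>)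
  then obtain Q' d' where "orthogonal_matrix Q'" "?A = spectral_matrix Q' d'"
    "spd_pow ?A t = spectral_matrix Q' (\<lambda>i. d' i powr t)"
    by blast
  then show ?thesis
    using spectral_matrix_2x2_fun_interp[where Q = Q' and d = d' and f = "\<lambda>x. x powr t"]
      spectral_matrix_2x2_fun_interp[where Q = Q and d = d and f = "\<lambda>x. x powr t"] assms(1)
    by simp
qed

lemma spd_pow_interp:
  fixes A :: "real^2^2"
  assumes "spd A"
  shows "spd_pow A t = interp_slope (\<lambda>x. x powr t) (lambda_min A) (lambda_max A) *\<^sub>R A
    + interp_const (\<lambda>x. x powr t) (lambda_min A) (lambda_max A) *\<^sub>R mat 1"
proof -
  obtain Q d where "orthogonal_matrix Q" "\<forall>i. d i > 0" "A = spectral_matrix Q d"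
    using assms by (rule spd_2x2_spectral)
  then show ?thesis
    using spectral_matrix_2x2_fun_interp[where Q = Q and d = d and f = "\<lambda>x. x powr t"]
    by (simp add: spd_pow_spectral_matrix)
qed

lemma spd_pow_add:
  fixes A :: "real^2^2"
  assumes "spd A"
  shows "spd_pow A s ** spd_pow A t = spd_pow A (s + t)"
proof -
  obtain Q d where "orthogonal_matrix Q" "\<forall>i. d i > 0" "A = spectral_matrix Q d"
    using assms by (rule spd_2x2_spectral)
  then show ?thesis
    by (simp add: spd_pow_spectral_matrix spectral_matrix_mult powr_add)
qed

lemma spd_pow_0:
  fixes A :: "real^2^2"
  assumes "spd A"
  shows "spd_pow A 0 = mat 1"
proof -
  obtain Q d where "orthogonal_matrix Q" "\<forall>i. d i > 0" "A = spectral_matrix Q d"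
    using assms by (rule spd_2x2_spectral)
  then show ?thesis
    by (simp add: spd_pow_spectral_matrix spectral_matrix_const less_imp_neq[symmetric])
qed

lemma spd_pow_1:
  fixes A :: "real^2^2"
  assumes "spd A"
  shows "spd_pow A 1 = A"
proof -
  obtain Q d where "orthogonal_matrix Q" "\<forall>i. d i > 0" "A = spectral_matrix Q d"
    using assms by (rule spd_2x2_spectral)
  moreover from this(2) have "(\<lambda>i. d i powr 1) = d"
    by (simp add: fun_eq_iff less_imp_le)
  ultimately show ?thesis
    by (simp add: spd_pow_spectral_matrix)
qed

lemma transpose_spd_pow:
  fixes A :: "real^2^2"
  assumes "spd A"
  shows "transpose (spd_pow A t) = spd_pow A t"
proof -
  obtain Q d where "orthogonal_matrix Q" "\<forall>i. d i > 0" "A = spectral_matrix Q d"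
    using assms by (rule spd_2x2_spectral)
  then show ?thesis
    by (simp add: spd_pow_spectral_matrix transpose_spectral_matrix)
qed

lemma matrix_inv_spd:
  fixes A :: "real^2^2"
  assumes "spd A"
  shows "matrix_inv A = spd_pow A (-1)"
  using spd_pow_add[OF assms, of 1 "-1"] spd_pow_add[OF assms, of "-1" 1]
  by (intro matrix_inv_eqI) (simp_all add: spd_pow_0 spd_pow_1 assms)

lemma spd_2x2_lambda_min_pos:
  fixes A :: "real^2^2"
  assumes "spd A"
  shows "lambda_min A > 0"
proof -
  obtain Q d where "orthogonal_matrix Q" "\<forall>i. d i > 0" "A = spectral_matrix Q d"
    using assms by (rule spd_2x2_spectral)
  then show ?thesis
    by (simp add: lambda_min_spectral_matrix_2x2)
qed

lemma spd_2x2_scalar_if_not_lambda_min_less: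
  fixes A :: "real^2^2"
  assumes "spd A" and "\<not> lambda_min A < lambda_max A"
  shows "A = lambda_min A *\<^sub>R mat 1"
proof -
  obtain Q d where Q: "orthogonal_matrix Q" and A: "A = spectral_matrix Q d"
    using assms(1) by (rule spd_2x2_spectral)
  define c where "c = lambda_min A"
  have "d 1 = c" "d 2 = c"
    using assms(2) Q A
    by (auto simp: c_def lambda_min_spectral_matrix_2x2 lambda_max_spectral_matrix_2x2)
  then have "d = (\<lambda>i. c)"
    by (metis exhaust_2)
  then have "A = c *\<^sub>R mat 1"
    using A Q by (simp add: spectral_matrix_const)
  then show ?thesis
    unfolding c_def .
qed

lemma spd_pow_half_identities:
  fixes X :: "real^2^2"
  assumes "spd X"
  defines "S \<equiv> spd_pow X (1/2)" and "R \<equiv> spd_pow X (-1/2)"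
  shows "S ** R = mat 1" and "R ** S = mat 1" and "S ** S = X" and "R ** R = matrix_inv X"
    and "transpose R = R"
  using assms spd_pow_add[OF assms(1)]
  by (simp_all add: spd_pow_0 spd_pow_1 matrix_inv_spd transpose_spd_pow)

definition whitened :: "real^'n^'n \<Rightarrow> real^'n^'n \<Rightarrow> real^'n^'n" where
  "whitened X Y = spd_pow X (-1/2) ** Y ** spd_pow X (-1/2)"

lemma unwhiten_whitened:
  fixes X Y :: "real^2^2"
  assumes "spd X"
  shows "spd_pow X (1/2) ** whitened X Y ** spd_pow X (1/2) = Y"
proof -
  have "spd_pow X (1/2) ** whitened X Y ** spd_pow X (1/2)
      = (spd_pow X (1/2) ** spd_pow X (-1/2)) ** Y ** (spd_pow X (-1/2) ** spd_pow X (1/2))"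
    by (simp only: whitened_def matrix_mul_assoc)
  also have "\<dots> = Y"
    by (simp only: spd_pow_half_identities[OF assms] matrix_mul_lid matrix_mul_rid)
  finally show ?thesis .
qed

lemma spd_whitened:
  fixes X Y :: "real^2^2"
  assumes "spd X" and "spd Y"
  shows "spd (whitened X Y)"
proof -
  have "invertible (spd_pow X (-1/2))"
    unfolding invertible_def using spd_pow_half_identities[OF assms(1)] by blast
  then have "spd (transpose (spd_pow X (-1/2)) ** Y ** spd_pow X (-1/2))"
    by (rule spd_congruence[OF assms(2)])
  then show ?thesis
    by (simp only: whitened_def spd_pow_half_identities(5)[OF assms(1)])
qed

lemma real_eigenvalues_whitened:
  fixes X Y :: "real^2^2"
  assumes "spd X"
  shows "real_eigenvalues (Y ** matrix_inv X) = real_eigenvalues (whitened X Y)"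
proof -
  have "spd_pow X (1/2) ** whitened X Y ** spd_pow X (-1/2)
      = (spd_pow X (1/2) ** spd_pow X (-1/2)) ** Y ** (spd_pow X (-1/2) ** spd_pow X (-1/2))"
    by (simp only: whitened_def matrix_mul_assoc)
  also have "\<dots> = Y ** matrix_inv X"
    by (simp only: spd_pow_half_identities[OF assms] matrix_mul_lid)
  finally show ?thesis
    using real_eigenvalues_similar spd_pow_half_identities(1,2)[OF assms] by metis
qed

lemma geo_mean_2x2_interp:
  fixes X Y :: "real^2^2"
  assumes "spd X" and "spd Y"
  defines "M \<equiv> whitened X Y"
  shows "geo_mean X t Y = interp_slope (\<lambda>x. x powr t) (lambda_min M) (lambda_max M) *\<^sub>R Y
    + interp_const (\<lambda>x. x powr t) (lambda_min M) (lambda_max M) *\<^sub>R X"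
proof -
  let ?S = "spd_pow X (1/2)" and ?a = "interp_slope (\<lambda>x. x powr t) (lambda_min M) (lambda_max M)"
    and ?b = "interp_const (\<lambda>x. x powr t) (lambda_min M) (lambda_max M)"
  have "geo_mean X t Y = ?S ** (?a *\<^sub>R M + ?b *\<^sub>R mat 1) ** ?S"
    using spd_pow_interp[OF spd_whitened[OF assms(1,2)]]
    by (simp add: geo_mean_def M_def whitened_def)
  also have "\<dots> = ?a *\<^sub>R (?S ** M ** ?S) + ?b *\<^sub>R (?S ** ?S)"
    by (simp add: matrix_add_ldistrib matrix_add_rdistrib matrix_scalar_ac
        scalar_matrix_assoc[symmetric])
  finally show ?thesis
    using assms(1) by (simp add: M_def unwhiten_whitened spd_pow_half_identities)
qed

lemma thompson_geo_whitened:
  fixes X Y :: "real^2^2"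
  assumes "spd X"
  defines "M \<equiv> whitened X Y"
  shows "thompson_geo X t Y
    = phi_ab (lambda_min M) (lambda_max M) t *\<^sub>R Y + psi_ab (lambda_min M) (lambda_max M) t *\<^sub>R X"
  using real_eigenvalues_whitened[OF assms(1), of Y]
  by (simp add: thompson_geo_def Let_def lambda_min_def lambda_max_def M_def)

lemma proportional_if_whitened_scalar:
  fixes X Y :: "real^2^2"
  assumes "spd X" and "whitened X Y = c *\<^sub>R mat 1"
  shows "Y = c *\<^sub>R X"
  using unwhiten_whitened[OF assms(1), of Y] spd_pow_half_identities(3)[OF assms(1)] assms(2)
  by (simp add: matrix_scalar_ac scalar_matrix_assoc[symmetric])

lemma phi_psi_ab_degenerate:
  assumes "\<alpha> > 0" and "\<not> \<alpha> < \<beta>"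
  shows "phi_ab \<alpha> \<beta> t * \<alpha> + psi_ab \<alpha> \<beta> t = \<alpha> powr t"
proof -
  have "\<alpha> powr (t - 1) * \<alpha> = \<alpha> powr t"
    using assms(1) by (simp add: powr_diff)
  then show ?thesis
    using assms(2) by (simp add: phi_ab_def psi_ab_def algebra_simps)
qed

theorem proposition3p2:
  fixes X Y :: "real^2^2" and t :: real
  assumes "spd X" and "spd Y" and "0 \<le> t" and "t \<le> 1"
  shows "geo_mean X t Y = thompson_geo X t Y"
  \<comment> \<open>the identity holds for every real \<open>t\<close>\<close>
proof -
  define \<alpha> \<beta> where "\<alpha> = lambda_min (whitened X Y)" and "\<beta> = lambda_max (whitened X Y)"
  have M: "spd (whitened X Y)"
    using assms(1,2) by (rule spd_whitened)
  have thompson: "thompson_geo X t Y = phi_ab \<alpha> \<beta> t *\<^sub>R Y + psi_ab \<alpha> \<beta> t *\<^sub>R X"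
    unfolding \<alpha>_def \<beta>_def using assms(1) by (rule thompson_geo_whitened)
  have geo: "geo_mean X t Y
      = interp_slope (\<lambda>x. x powr t) \<alpha> \<beta> *\<^sub>R Y + interp_const (\<lambda>x. x powr t) \<alpha> \<beta> *\<^sub>R X"
    unfolding \<alpha>_def \<beta>_def using assms(1,2) by (rule geo_mean_2x2_interp)
  show ?thesis
  proof (cases "\<alpha> < \<beta>")
    case True
    then show ?thesis
      by (simp add: geo thompson interp_slope_def interp_const_def phi_ab_def psi_ab_def)
  next
    case False
    have "whitened X Y = \<alpha> *\<^sub>R mat 1"
      using spd_2x2_scalar_if_not_lambda_min_less[OF M] False unfolding \<alpha>_def \<beta>_def .
    then have Y: "Y = \<alpha> *\<^sub>R X"
      by (rule proportional_if_whitened_scalar[OF assms(1)])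
    have "\<alpha> > 0"
      unfolding \<alpha>_def using M by (rule spd_2x2_lambda_min_pos)
    have "thompson_geo X t Y = (phi_ab \<alpha> \<beta> t * \<alpha> + psi_ab \<alpha> \<beta> t) *\<^sub>R X"
      using thompson by (simp add: Y scaleR_add_left)
    also have "\<dots> = \<alpha> powr t *\<^sub>R X"
      using \<open>\<alpha> > 0\<close> False by (simp add: phi_psi_ab_degenerate)
    also have "\<dots> = geo_mean X t Y"
      using geo False by (simp add: Y interp_slope_def interp_const_def)
    finally show ?thesis ..
  qed
qed

end
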